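(* Let $G=(V,E)$ be a loopless multigraph with $n$ vertices, $m$ edges and maximum degree $\Delta$. Then there are $\Delta$ spanning forests $F_1,\dots,F_\Delta$ on vertex set $V$, each having either $\lceil m/\Delta\rceil$ or $\lfloor m/\Delta\rfloor$ edges, whose edge sets partition $E$.
   Context: Forests may have no edges; a forest in a multigraph contains no cycles (in particular no two parallel edges). *)

theory Defs
  imports Complex_Main
begin

definition loopless_multigraph :: "'v set \<Rightarrow> 'e set \<Rightarrow> ('e \<Rightarrow> 'v set) \<Rightarrow> bool" where
  "loopless_multigraph V E ends \<longleftrightarrow> finite V \<and> finite E \<and>
     (\<forall>e\<in>E. ends e \<subseteq> V \<and> card (ends e) = 2)"

definition degree :: "'e set \<Rightarrow> ('e \<Rightarrow> 'v set) \<Rightarrow> 'v \<Rightarrow> nat" where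
  "degree E ends v = card {e\<in>E. v \<in> ends e}"

definition max_degree :: "'v set \<Rightarrow> 'e set \<Rightarrow> ('e \<Rightarrow> 'v set) \<Rightarrow> nat" where
  "max_degree V E ends = Max (insert 0 (degree E ends ` V))"

text \<open>A cycle in the edge set F: k \<ge> 2 distinct edges es and k distinct vertices vs
  such that edge i joins vs!i and vs!((i+1) mod k). (k = 2 covers parallel edges.)\<close>

definition is_cycle :: "'e set \<Rightarrow> ('e \<Rightarrow> 'v set) \<Rightarrow> 'e list \<Rightarrow> 'v list \<Rightarrow> bool" where
  "is_cycle F ends es vs \<longleftrightarrow> length es \<ge> 2 \<and> length vs = length es \<and>
     distinct es \<and> distinct vs \<and> set es \<subseteq> F \<and>
     (\<forall>i < length es. ends (es ! i) = {vs ! i, vs ! ((i + 1) mod length es)})"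

definition is_forest :: "'e set \<Rightarrow> ('e \<Rightarrow> 'v set) \<Rightarrow> bool" where
  "is_forest F ends \<longleftrightarrow> \<not> (\<exists>es vs. is_cycle F ends es vs)"

end

theory Submission
  imports Defs
begin

text \<open>
  Partitions of the edges into \<open>\<Delta>\<close> forests exist greedily: an edge \<open>uv\<close> can join any forest
  without an edge at \<open>u\<close>, and as \<open>u\<close> has fewer than \<open>\<Delta>\<close> other edges, one of the
  \<open>\<Delta>\<close> forests misses \<open>u\<close>. Take such a partition minimising the sum of the squared
  part sizes. Forests satisfy the matroid augmentation property (a forest with \<open>k\<close> edges
  on \<open>n\<close> vertices has \<open>n - k\<close> components): if \<open>|F\<^sub>i| \<ge> |F\<^sub>j| + 2\<close>, some edge
  of \<open>F\<^sub>i\<close> can be moved to \<open>F\<^sub>j\<close> keeping it a forest, which lowers the sum of squares.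
  So the part sizes differ pairwise by at most one, and \<open>\<Delta>\<close> such numbers with sum
  \<open>m\<close> are all \<open>\<lfloor>m/\<Delta>\<rfloor>\<close> or \<open>\<lceil>m/\<Delta>\<rceil>\<close>.
\<close>

section \<open>Connectivity and components\<close>

definition edge_rel :: "'e set \<Rightarrow> ('e \<Rightarrow> 'v set) \<Rightarrow> ('v \<times> 'v) set" where
  "edge_rel F ends = {(x, y). \<exists>e\<in>F. ends e = {x, y}}"

abbreviation conn :: "'e set \<Rightarrow> ('e \<Rightarrow> 'v set) \<Rightarrow> ('v \<times> 'v) set" where
  "conn F ends \<equiv> (edge_rel F ends)\<^sup>*"

lemma sym_edge_rel: "sym (edge_rel F ends)"
  unfolding edge_rel_def sym_def by (auto simp: insert_commute)

lemma conn_sym: "(x, y) \<in> conn F ends \<Longrightarrow> (y, x) \<in> conn F ends"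
  by (meson sym_edge_rel sym_rtrancl symD)

lemma conn_mono: "F \<subseteq> G \<Longrightarrow> conn F ends \<subseteq> conn G ends"
  unfolding edge_rel_def by (rule rtrancl_mono) auto

lemma edge_rel_insert:
  "ends e = {u, v} \<Longrightarrow> edge_rel (insert e F) ends = insert (u, v) (insert (v, u) (edge_rel F ends))"
  unfolding edge_rel_def by (auto simp: doubleton_eq_iff)

lemma conn_insert:
  fixes F :: "'e set"
  assumes "ends e = {u, v}"
  defines "M \<equiv> conn F ends `` {u} \<union> conn F ends `` {v}"
  shows "conn (insert e F) ends = conn F ends \<union> M \<times> M"
proof -
  from assms(1) have rel: "edge_rel (insert e F) ends = insert (u, v) (insert (v, u) (edge_rel F ends))"
    by (rule edge_rel_insert)
  show ?thesis
    unfolding rel M_def rtrancl_insert by (auto dest: conn_sym intro: rtrancl_trans)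
qed

lemma conn_Un_absorb:
  assumes "edge_rel A ends \<subseteq> conn B ends"
  shows "conn (A \<union> B) ends = conn B ends"
proof (rule rtrancl_subset)
  show "edge_rel B ends \<subseteq> edge_rel (A \<union> B) ends" "edge_rel (A \<union> B) ends \<subseteq> conn B ends"
    using assms unfolding edge_rel_def by auto
qed

lemma conn_Image_eq: "(x, y) \<in> conn F ends \<Longrightarrow> conn F ends `` {x} = conn F ends `` {y}"
  by (auto dest: conn_sym intro: rtrancl_trans)

definition num_components :: "'v set \<Rightarrow> 'e set \<Rightarrow> ('e \<Rightarrow> 'v set) \<Rightarrow> nat" where
  "num_components V F ends = card ((\<lambda>x. conn F ends `` {x}) ` V)"

lemma num_components_empty: "num_components V {} ends = card V"
proof -
  have "edge_rel {} ends = {}"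
    unfolding edge_rel_def by simp
  then show ?thesis
    unfolding num_components_def by (simp add: card_image inj_on_def)
qed

lemma num_components_antimono:
  assumes "finite V" "conn F ends \<subseteq> conn G ends"
  shows "num_components V G ends \<le> num_components V F ends"
proof -
  have "conn G ends `` (conn F ends `` {x}) = conn G ends `` {x}" for x
    using assms(2) by (auto intro: rtrancl_trans)
  then have "(\<lambda>x. conn G ends `` {x}) ` V = Image (conn G ends) ` (\<lambda>x. conn F ends `` {x}) ` V"
    by (simp add: image_image)
  then show ?thesis
    unfolding num_components_def by (metis assms(1) card_image_le finite_imageI)
qed

lemma num_components_insert_bridge:
  assumes "finite V" "u \<in> V" "v \<in> V" "ends e = {u, v}" "(u, v) \<notin> conn F ends"
  shows "num_components V (insert e F) ends + 1 = num_components V F ends"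
proof -
  define C where "C x = conn F ends `` {x}" for x
  define M where "M = C u \<union> C v"
  have in_M: "x \<in> M \<longleftrightarrow> C x = C u \<or> C x = C v" for x
    unfolding M_def C_def by (auto dest: conn_sym conn_Image_eq)
  have "conn (insert e F) ends = conn F ends \<union> M \<times> M"
    using assms(4) unfolding M_def C_def by (rule conn_insert)
  then have "conn (insert e F) ends `` {x} = (if x \<in> M then M else C x)" for x
    using in_M[of x] unfolding M_def C_def by auto
  then have "(\<lambda>x. conn (insert e F) ends `` {x}) ` V = insert M (C ` V - {C u, C v})"
    using assms(2,3) in_M by (auto simp: image_iff)
  moreover have "M \<notin> C ` V" and "C u \<noteq> C v"
    using assms(5) in_M unfolding M_def C_def by (auto dest: conn_sym)
  moreover have "{C u, C v} \<subseteq> C ` V"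
    using assms(2,3) by auto
  ultimately show ?thesis
    unfolding num_components_def C_def[symmetric]
    using assms(1) card_Diff_subset[of "{C u, C v}" "C ` V"] card_mono[of "C ` V" "{C u, C v}"]
    by auto
qed

section \<open>Forests\<close>

lemma is_forest_empty: "is_forest {} ends"
  unfolding is_forest_def is_cycle_def by auto

lemma is_forest_subset: "is_forest F ends \<Longrightarrow> G \<subseteq> F \<Longrightarrow> is_forest G ends"
  unfolding is_forest_def is_cycle_def by blast

lemma cycle_edge_endpoints_conn:
  assumes cycle: "is_cycle F ends es vs" and j: "j < length es"
  shows "(vs ! ((j + 1) mod length es), vs ! j) \<in> conn (set es - {es ! j}) ends"
proof -
  let ?k = "length es" and ?R = "conn (set es - {es ! j}) ends"
  have k: "?k \<ge> 2" and distinct: "distinct es"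
    and ends: "\<And>i. i < ?k \<Longrightarrow> ends (es ! i) = {vs ! i, vs ! ((i + 1) mod ?k)}"
    using cycle unfolding is_cycle_def by auto
  have walk_around: "(vs ! ((j + 1) mod ?k), vs ! ((j + 1 + t) mod ?k)) \<in> ?R" if "t < ?k" for t
    using that
  proof (induction t)
    case 0
    show ?case by simp
  next
    case (Suc t)
    define i where "i = (j + 1 + t) mod ?k"
    have i: "i < ?k" "i \<noteq> j"
      using Suc.prems j unfolding i_def by (auto simp: mod_if)
    have "(i + 1) mod ?k = (j + 1 + Suc t) mod ?k"
      unfolding i_def by (simp add: mod_Suc_eq)
    moreover have "es ! i \<in> set es - {es ! j}"
      using i j distinct by (auto simp: nth_eq_iff_index_eq)
    ultimately have "(vs ! i, vs ! ((j + 1 + Suc t) mod ?k)) \<in> edge_rel (set es - {es ! j}) ends"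
      using ends[OF i(1)] unfolding edge_rel_def by auto
    with Suc show ?case
      unfolding i_def by (auto intro: rtrancl_into_rtrancl)
  qed
  have "j + 1 + (?k - 1) = j + ?k"
    using k by simp
  then have "(j + 1 + (?k - 1)) mod ?k = j"
    using j by simp
  moreover have "?k - 1 < ?k"
    using k by simp
  ultimately show ?thesis
    using walk_around[of "?k - 1"] by simp
qed

definition walk :: "'e set \<Rightarrow> ('e \<Rightarrow> 'v set) \<Rightarrow> 'v list \<Rightarrow> 'e list \<Rightarrow> bool" where
  "walk F ends xs es \<longleftrightarrow> length xs = Suc (length es) \<and> set es \<subseteq> F \<and>
     (\<forall>i < length es. ends (es ! i) = {xs ! i, xs ! Suc i})"

lemma conn_imp_simple_walk:
  assumes "(x, y) \<in> conn F ends"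
  shows "\<exists>xs es. walk F ends xs es \<and> hd xs = x \<and> last xs = y \<and> distinct xs"
  using assms
proof (induction rule: rtrancl_induct)
  case base
  have "walk F ends [x] []"
    unfolding walk_def by simp
  then show ?case by fastforce
next
  case (step y z)
  then obtain xs es where xs: "walk F ends xs es" "hd xs = x" "last xs = y" "distinct xs"
    by blast
  obtain f where f: "f \<in> F" "ends f = {y, z}"
    using step.hyps(2) unfolding edge_rel_def by auto
  have len: "length xs = Suc (length es)" and es: "set es \<subseteq> F"
    and ends: "\<forall>i < length es. ends (es ! i) = {xs ! i, xs ! Suc i}"
    using xs(1) unfolding walk_def by auto
  have "xs \<noteq> []"
    using len by auto
  show ?case
  proof (cases "z \<in> set xs")
    case True
    then obtain p where p: "p < length xs" "xs ! p = z"
      by (auto simp: in_set_conv_nth)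
    have "walk F ends (take (Suc p) xs) (take p es)"
      unfolding walk_def using len p es ends set_take_subset[of p es] by auto
    moreover have "last (take (Suc p) xs) = z"
      using p by (simp add: take_Suc_conv_app_nth)
    ultimately show ?thesis
      using xs(2,4) \<open>xs \<noteq> []\<close> by (metis distinct_take hd_take zero_less_Suc)
  next
    case False
    have "xs ! length es = y"
      using xs(3) len \<open>xs \<noteq> []\<close> by (simp add: last_conv_nth)
    then have "walk F ends (xs @ [z]) (es @ [f])"
      unfolding walk_def using len es ends f by (auto simp: nth_append less_Suc_eq)
    then show ?thesis
      using xs(2,4) False \<open>xs \<noteq> []\<close> by fastforce
  qed
qed

lemma walk_distinct_edges:
  assumes "walk F ends xs es" "distinct xs"
  shows "distinct es"
  unfolding distinct_conv_nth
proof (intro allI impI)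
  fix i j
  assume ij: "i < length es" "j < length es" "i \<noteq> j"
  have len: "length xs = Suc (length es)"
    and ends: "\<forall>i < length es. ends (es ! i) = {xs ! i, xs ! Suc i}"
    using assms(1) unfolding walk_def by auto
  have xs_inj: "xs ! a = xs ! b \<longleftrightarrow> a = b" if "a < length xs" "b < length xs" for a b
    using assms(2) that nth_eq_iff_index_eq by blast
  show "es ! i \<noteq> es ! j"
  proof
    assume "es ! i = es ! j"
    then have "{xs ! i, xs ! Suc i} = {xs ! j, xs ! Suc j}"
      using ends ij by metis
    then have "i = Suc j \<and> j = Suc i"
      using xs_inj ij len by (auto simp: doubleton_eq_iff)
    then show False by linarith
  qed
qed

lemma simple_walk_cycle:
  assumes walk: "walk F ends xs es" and "distinct xs" "hd xs = u" "last xs = v" "u \<noteq> v"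
    and e: "e \<notin> F" "ends e = {u, v}"
  shows "is_cycle (insert e F) ends (es @ [e]) xs"
proof -
  have len: "length xs = Suc (length es)" and es: "set es \<subseteq> F"
    and ends: "\<forall>i < length es. ends (es ! i) = {xs ! i, xs ! Suc i}"
    using walk unfolding walk_def by auto
  have "xs \<noteq> []"
    using len by auto
  have "es \<noteq> []"
    using len assms(3-5) by (cases xs) auto
  moreover have "xs ! 0 = u" "xs ! length es = v"
    using assms(3,4) len \<open>xs \<noteq> []\<close> by (auto simp: hd_conv_nth last_conv_nth)
  moreover have "distinct es"
    using walk_distinct_edges walk assms(2) .
  moreover have "(i + 1) mod Suc (length es) = (if i = length es then 0 else i + 1)"
    if "i < Suc (length es)" for i
    using that by auto
  ultimately show ?thesis
    unfolding is_cycle_def using len es ends e assms(2)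
    by (auto simp: nth_append less_Suc_eq Suc_le_eq)
qed

lemma is_forest_insert_not_conn:
  assumes "is_forest (insert e F) ends" "e \<notin> F" "ends e = {u, v}" "u \<noteq> v"
  shows "(u, v) \<notin> conn F ends"
proof
  assume "(u, v) \<in> conn F ends"
  from conn_imp_simple_walk[OF this]
  obtain xs es where "walk F ends xs es" "distinct xs" "hd xs = u" "last xs = v"
    by blast
  then have "is_cycle (insert e F) ends (es @ [e]) xs"
    using assms(4,2,3) by (rule simple_walk_cycle)
  then show False
    using assms(1) unfolding is_forest_def by blast
qed

lemma is_forest_insert:
  assumes forest: "is_forest F ends" and e: "ends e = {u, v}" and not_conn: "(u, v) \<notin> conn F ends"
  shows "is_forest (insert e F) ends"
  unfolding is_forest_def
proof
  assume "\<exists>es vs. is_cycle (insert e F) ends es vs"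
  then obtain es vs where cycle: "is_cycle (insert e F) ends es vs"
    by blast
  then have edges: "set es \<subseteq> insert e F"
    unfolding is_cycle_def by auto
  show False
  proof (cases "e \<in> set es")
    case False
    then have "set es \<subseteq> F"
      using edges by blast
    then have "is_cycle F ends es vs"
      using cycle unfolding is_cycle_def by simp
    then show False
      using forest unfolding is_forest_def by blast
  next
    case True
    then obtain j where j: "j < length es" "es ! j = e"
      by (meson in_set_conv_nth)
    have "set es - {es ! j} \<subseteq> F"
      using edges j by blast
    then have "conn (set es - {es ! j}) ends \<subseteq> conn F ends"
      by (rule conn_mono)
    then have "(vs ! ((j + 1) mod length es), vs ! j) \<in> conn F ends"
      using cycle_edge_endpoints_conn[OF cycle j(1)] by blast
    moreover have "ends (es ! j) = {vs ! j, vs ! ((j + 1) mod length es)}"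
      using cycle j(1) unfolding is_cycle_def by blast
    ultimately have "(u, v) \<in> conn F ends \<or> (v, u) \<in> conn F ends"
      using j(2) e by (auto simp: doubleton_eq_iff)
    then show False
      using not_conn conn_sym by metis
  qed
qed

lemma conn_from_isolated:
  assumes "\<forall>f\<in>F. u \<notin> ends f" "(u, v) \<in> conn F ends"
  shows "v = u"
  using assms(2)
proof (cases rule: converse_rtranclE)
  case (step w)
  then show ?thesis
    using assms(1) unfolding edge_rel_def by auto
qed simp

lemma loopless_multigraph_subset:
  "loopless_multigraph V E ends \<Longrightarrow> F \<subseteq> E \<Longrightarrow> loopless_multigraph V F ends"
  unfolding loopless_multigraph_def by (auto intro: finite_subset)

lemma loopless_multigraph_edgeE:
  assumes "loopless_multigraph V E ends" "e \<in> E"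
  obtains u v where "u \<in> V" "v \<in> V" "u \<noteq> v" "ends e = {u, v}"
proof -
  have "ends e \<subseteq> V" "card (ends e) = 2"
    using assms unfolding loopless_multigraph_def by auto
  then show thesis
    using that unfolding card_2_iff by blast
qed

lemma forest_num_components:
  assumes "loopless_multigraph V F ends" "is_forest F ends"
  shows "num_components V F ends + card F = card V"
proof -
  have "finite F" "finite V"
    using assms(1) unfolding loopless_multigraph_def by auto
  from this(1) assms show ?thesis
  proof (induction F rule: finite_induct)
    case empty
    show ?case by (simp add: num_components_empty)
  next
    case (insert b F)
    obtain u v where uv: "u \<in> V" "v \<in> V" "u \<noteq> v" "ends b = {u, v}"
      using loopless_multigraph_edgeE[OF insert.prems(1) insertI1] .
    have F: "loopless_multigraph V F ends" "is_forest F ends"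
      using loopless_multigraph_subset[OF insert.prems(1) subset_insertI]
        is_forest_subset[OF insert.prems(2) subset_insertI] .
    have "(u, v) \<notin> conn F ends"
      using insert.prems(2) insert.hyps(2) uv(4,3) by (rule is_forest_insert_not_conn)
    with \<open>finite V\<close> uv(1,2,4)
    have "num_components V (insert b F) ends + 1 = num_components V F ends"
      by (rule num_components_insert_bridge)
    then show ?case
      using insert.IH[OF F] insert.hyps by simp
  qed
qed

lemma forest_augment:
  assumes A: "loopless_multigraph V A ends" "is_forest A ends"
    and B: "loopless_multigraph V B ends" "is_forest B ends"
    and less: "card B < card A"
  shows "\<exists>a\<in>A - B. is_forest (insert a B) ends"
proof (rule ccontr)
  assume no_augment: "\<not> ?thesis"
  have "edge_rel A ends \<subseteq> conn B ends"
  proof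
    fix p
    assume "p \<in> edge_rel A ends"
    then obtain a x y where a: "a \<in> A" "ends a = {x, y}" "p = (x, y)"
      unfolding edge_rel_def by auto
    show "p \<in> conn B ends"
    proof (cases "a \<in> B")
      case True
      then show ?thesis
        using a(2,3) unfolding edge_rel_def by auto
    next
      case False
      with no_augment a(1) have "\<not> is_forest (insert a B) ends"
        by blast
      then have "(x, y) \<in> conn B ends"
        using is_forest_insert[OF B(2) a(2)] by blast
      then show ?thesis
        using a(3) by simp
    qed
  qed
  then have "num_components V B ends = num_components V (A \<union> B) ends"
    unfolding num_components_def by (simp only: conn_Un_absorb)
  also have "\<dots> \<le> num_components V A ends"
    using A(1) unfolding loopless_multigraph_def by (intro num_components_antimono conn_mono) auto
  finally show False
    using forest_num_components[OF A] forest_num_components[OF B] less by linarith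
qed

section \<open>Partitions into forests\<close>

definition forest_partition :: "nat \<Rightarrow> 'e set \<Rightarrow> ('e \<Rightarrow> 'v set) \<Rightarrow> (nat \<Rightarrow> 'e set) \<Rightarrow> bool" where
  "forest_partition D E ends F \<longleftrightarrow> (\<forall>i < D. F i \<subseteq> E \<and> is_forest (F i) ends) \<and>
     (\<forall>i < D. \<forall>j < D. i \<noteq> j \<longrightarrow> F i \<inter> F j = {}) \<and> (\<Union>i < D. F i) = E"

lemma forest_partition_empty: "forest_partition D {} ends (\<lambda>_. {})"
  unfolding forest_partition_def by (simp add: is_forest_empty)

lemma forest_partition_insert:
  assumes "forest_partition D E ends F" "e \<notin> E" "i < D" "is_forest (insert e (F i)) ends"
  shows "forest_partition D (insert e E) ends (F(i := insert e (F i)))"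
  using assms unfolding forest_partition_def by (auto 4 3 split: if_splits)

lemma forest_partition_remove:
  assumes "forest_partition D E ends F" "i < D" "a \<in> F i"
  shows "forest_partition D (E - {a}) ends (F(i := F i - {a}))"
  using assms unfolding forest_partition_def by (auto 4 3 intro: is_forest_subset split: if_splits)

lemma forest_partition_move:
  assumes "forest_partition D E ends F" "i < D" "j < D" "i \<noteq> j" "a \<in> F i"
    and "is_forest (insert a (F j)) ends"
  shows "forest_partition D E ends (F(i := F i - {a}, j := insert a (F j)))"
proof -
  have "forest_partition D (E - {a}) ends (F(i := F i - {a}))"
    using assms(1,2,5) by (rule forest_partition_remove)
  moreover have "insert a (E - {a}) = E"
    using assms(1,2,5) unfolding forest_partition_def by auto
  ultimately show ?thesis
    using forest_partition_insert[of D "E - {a}" ends "F(i := F i - {a})" a j] assms(3,4,6) by simp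
qed

lemma sum_card_forest_partition:
  assumes "forest_partition D E ends F" "finite E"
  shows "(\<Sum>k<D. card (F k)) = card E"
proof -
  have "finite (F k)" if "k < D" for k
    using assms that unfolding forest_partition_def by (meson finite_subset)
  then have "card (\<Union>k<D. F k) = (\<Sum>k<D. card (F k))"
    using assms(1) unfolding forest_partition_def by (intro card_UN_disjoint) auto
  then show ?thesis
    using assms(1) unfolding forest_partition_def by simp
qed

lemma degree_insert:
  assumes "finite E" "e \<notin> E" "u \<in> ends e"
  shows "degree (insert e E) ends u = Suc (degree E ends u)"
proof -
  have "{f \<in> insert e E. u \<in> ends f} = insert e {f \<in> E. u \<in> ends f}"
    using assms(3) by auto
  then show ?thesis
    unfolding degree_def using assms(1,2) by simp
qed

lemma forest_partition_avoiding_vertex: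
  assumes F: "forest_partition D E ends F" and "finite E" "degree E ends u < D"
  obtains i where "i < D" "\<forall>f\<in>F i. u \<notin> ends f"
proof -
  let ?S = "{i. i < D \<and> (\<exists>f\<in>F i. u \<in> ends f)}"
  have "card ?S \<le> degree E ends u"
    unfolding degree_def
  proof (rule card_le_if_inj_on_rel[where r = "\<lambda>i f. f \<in> F i \<and> u \<in> ends f"])
    show "finite {f \<in> E. u \<in> ends f}"
      using \<open>finite E\<close> by simp
    show "\<exists>f. f \<in> {f \<in> E. u \<in> ends f} \<and> f \<in> F i \<and> u \<in> ends f" if "i \<in> ?S" for i
      using that F unfolding forest_partition_def by blast
    show "i = j" if "i \<in> ?S" "j \<in> ?S" "f \<in> F i \<and> u \<in> ends f" "f \<in> F j \<and> u \<in> ends f" for i j f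
      using that F unfolding forest_partition_def by blast
  qed
  then have "\<not> {..<D} \<subseteq> ?S"
    using \<open>degree E ends u < D\<close> card_mono[of ?S "{..<D}"] by auto
  then show thesis
    using that by auto
qed

lemma forest_partition_exists:
  assumes "loopless_multigraph V E ends" "\<forall>v. degree E ends v \<le> D"
  shows "\<exists>F. forest_partition D E ends F"
proof -
  have "finite E"
    using assms(1) unfolding loopless_multigraph_def by simp
  from this assms show ?thesis
  proof (induction E rule: finite_induct)
    case empty
    show ?case
      using forest_partition_empty by blast
  next
    case (insert e E)
    obtain u v where uv: "u \<noteq> v" "ends e = {u, v}"
      using loopless_multigraph_edgeE[OF insert.prems(1) insertI1] by metis
    have "degree E ends w \<le> degree (insert e E) ends w" for w
      unfolding degree_def using insert.hyps(1) by (intro card_mono) auto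
    then obtain F where F: "forest_partition D E ends F"
      using insert.IH loopless_multigraph_subset[OF insert.prems(1) subset_insertI] insert.prems(2)
      by (meson order_trans)
    have "degree E ends u < D"
      using degree_insert[OF insert.hyps(1,2)] uv(2) insert.prems(2) by (metis Suc_le_eq insertI1)
    then obtain i where i: "i < D" "\<forall>f\<in>F i. u \<notin> ends f"
      using forest_partition_avoiding_vertex[OF F insert.hyps(1)] by blast
    have "is_forest (F i) ends"
      using F i(1) unfolding forest_partition_def by blast
    moreover have "(u, v) \<notin> conn (F i) ends"
      using conn_from_isolated[OF i(2)] uv(1) by metis
    ultimately have "is_forest (insert e (F i)) ends"
      using uv(2) by (intro is_forest_insert)
    then show ?case
      using forest_partition_insert[OF F insert.hyps(2) i(1)] by blast
  qed
qed

section \<open>Balancing the partition\<close>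

lemma sum_squares_transfer_less:
  fixes g :: "nat \<Rightarrow> nat"
  assumes "finite K" "i \<in> K" "j \<in> K" "g j + 2 \<le> g i"
  shows "(\<Sum>k\<in>K. ((g(i := g i - 1, j := g j + 1)) k)\<^sup>2) < (\<Sum>k\<in>K. (g k)\<^sup>2)"
proof -
  let ?g' = "g(i := g i - 1, j := g j + 1)" and ?L = "K - {i} - {j}"
  have "i \<noteq> j"
    using assms(4) by auto
  have split: "sum h K = h i + (h j + sum h ?L)" for h :: "nat \<Rightarrow> nat"
    using assms(1-3) \<open>i \<noteq> j\<close> by (simp add: sum.remove)
  have rest: "(\<Sum>k\<in>?L. (?g' k)\<^sup>2) = (\<Sum>k\<in>?L. (g k)\<^sup>2)"
    by (rule sum.cong) auto
  obtain d where d: "g i = g j + 2 + d"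
    using assms(4) le_Suc_ex by blast
  have "(g i - 1)\<^sup>2 + (g j + 1)\<^sup>2 < (g i)\<^sup>2 + (g j)\<^sup>2"
    unfolding d by (simp add: power2_eq_square algebra_simps)
  then show ?thesis
    unfolding split[of "\<lambda>k. (?g' k)\<^sup>2"] split[of "\<lambda>k. (g k)\<^sup>2"] rest
    using \<open>i \<noteq> j\<close> by simp
qed

lemma balanced_forest_partition_exists:
  assumes "loopless_multigraph V E ends" "\<forall>v. degree E ends v \<le> D"
  shows "\<exists>F. forest_partition D E ends F \<and> (\<forall>i < D. \<forall>j < D. card (F i) \<le> card (F j) + 1)"
proof -
  let ?cost = "\<lambda>F. \<Sum>k<D. (card (F k))\<^sup>2"
  obtain F where F: "forest_partition D E ends F"
    and minimal: "\<And>F'. forest_partition D E ends F' \<Longrightarrow> ?cost F \<le> ?cost F'"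
    using ex_has_least_nat[of "forest_partition D E ends" _ ?cost] forest_partition_exists[OF assms]
    by blast
  have "card (F i) \<le> card (F j) + 1" if ij: "i < D" "j < D" for i j
  proof (rule ccontr)
    assume "\<not> ?thesis"
    then have gap: "card (F j) + 2 \<le> card (F i)" and "i \<noteq> j"
      by auto
    have "F i \<subseteq> E" "F j \<subseteq> E" and forests: "is_forest (F i) ends" "is_forest (F j) ends"
      using F ij unfolding forest_partition_def by blast+
    moreover have "card (F j) < card (F i)"
      using gap by simp
    ultimately obtain a where a: "a \<in> F i" "a \<notin> F j" "is_forest (insert a (F j)) ends"
      using forest_augment[OF loopless_multigraph_subset[OF assms(1)] forests(1)
          loopless_multigraph_subset[OF assms(1)] forests(2)] by blast
    define F' where "F' = F(i := F i - {a}, j := insert a (F j))"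
    have "forest_partition D E ends F'"
      unfolding F'_def using forest_partition_move[OF F ij \<open>i \<noteq> j\<close> a(1,3)] .
    moreover have "finite (F i)" "finite (F j)"
      using \<open>F i \<subseteq> E\<close> \<open>F j \<subseteq> E\<close> assms(1) unfolding loopless_multigraph_def by (auto intro: finite_subset)
    then have "card (F' k) = ((\<lambda>k. card (F k))(i := card (F i) - 1, j := card (F j) + 1)) k" for k
      unfolding F'_def using a(1,2) \<open>i \<noteq> j\<close> by auto
    then have "?cost F' < ?cost F"
      using sum_squares_transfer_less[of "{..<D}" i j "\<lambda>k. card (F k)"] ij gap by (simp only:) simp
    ultimately show False
      using minimal[of F'] by simp
  qed
  then show ?thesis
    using F by blast
qed

lemma int_eq_floor_or_ceiling:
  fixes x :: real and c :: int
  assumes "\<bar>x - of_int c\<bar> < 1"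
  shows "c = \<lfloor>x\<rfloor> \<or> c = \<lceil>x\<rceil>"
proof (cases "of_int c \<le> x")
  case True
  then have "\<lfloor>x\<rfloor> = c"
    using assms by (intro floor_unique) (auto simp: abs_less_iff)
  then show ?thesis by simp
next
  case False
  then have "\<lceil>x\<rceil> = c"
    using assms by (intro ceiling_unique) (auto simp: abs_less_iff)
  then show ?thesis by simp
qed

lemma nearly_equal_summands:
  fixes c :: "nat \<Rightarrow> nat"
  assumes balanced: "\<forall>i < D. \<forall>j < D. c i \<le> c j + 1" and i: "i < D"
  shows "c i = nat \<lceil>real (\<Sum>k<D. c k) / real D\<rceil> \<or> c i = nat \<lfloor>real (\<Sum>k<D. c k) / real D\<rfloor>"
proof -
  let ?K = "{..<D} - {i}" and ?m = "real (\<Sum>k<D. c k)"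
  have m: "?m = real (c i) + (\<Sum>k\<in>?K. real (c k))"
    using i by (simp add: sum.remove)
  have "real (card ?K) * (real (c i) - 1) \<le> (\<Sum>k\<in>?K. real (c k))"
    using balanced i by (intro sum_bounded_below) force
  moreover have "(\<Sum>k\<in>?K. real (c k)) \<le> real (card ?K) * (real (c i) + 1)"
    using balanced i by (intro sum_bounded_above) force
  moreover have "real (card ?K) = real D - 1"
    using i by simp
  ultimately have "real D * (real (c i) - 1) < ?m" "?m < real D * (real (c i) + 1)"
    unfolding m by (simp_all add: algebra_simps)
  then have "real (c i) - 1 < ?m / real D" "?m / real D < real (c i) + 1"
    using i by (simp_all add: pos_less_divide_eq pos_divide_less_eq mult.commute)
  then have "int (c i) = \<lfloor>?m / real D\<rfloor> \<or> int (c i) = \<lceil>?m / real D\<rceil>"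
    by (intro int_eq_floor_or_ceiling) (simp add: abs_less_iff)
  then show ?thesis
    by (metis nat_int)
qed

lemma degree_le_max_degree:
  assumes "loopless_multigraph V E ends"
  shows "degree E ends v \<le> max_degree V E ends"
proof (cases "v \<in> V")
  case True
  then show ?thesis
    using assms unfolding max_degree_def loopless_multigraph_def by (intro Max_ge) auto
next
  case False
  then have "{e \<in> E. v \<in> ends e} = {}"
    using assms unfolding loopless_multigraph_def by auto
  then show ?thesis
    unfolding degree_def by (metis card.empty le0)
qed

theorem lemma3p3:
  fixes V :: "'v set" and E :: "'e set" and ends :: "'e \<Rightarrow> 'v set"
  assumes "loopless_multigraph V E ends"
  shows "\<exists>F :: nat \<Rightarrow> 'e set.
           (\<forall>i < max_degree V E ends. F i \<subseteq> E \<and> is_forest (F i) ends \<and>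
              (card (F i) = nat \<lceil>real (card E) / real (max_degree V E ends)\<rceil> \<or>
               card (F i) = nat \<lfloor>real (card E) / real (max_degree V E ends)\<rfloor>)) \<and>
           (\<forall>i < max_degree V E ends. \<forall>j < max_degree V E ends. i \<noteq> j \<longrightarrow> F i \<inter> F j = {}) \<and>
           (\<Union>i < max_degree V E ends. F i) = E"
proof -
  let ?D = "max_degree V E ends"
  have "\<forall>v. degree E ends v \<le> ?D"
    using degree_le_max_degree[OF assms] by blast
  then obtain F where F: "forest_partition ?D E ends F"
    and balanced: "\<forall>i < ?D. \<forall>j < ?D. card (F i) \<le> card (F j) + 1"
    using balanced_forest_partition_exists[OF assms] by blast
  have "finite E"
    using assms unfolding loopless_multigraph_def by simp
  with F have "(\<Sum>k<?D. card (F k)) = card E"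
    by (rule sum_card_forest_partition)
  then have "card (F i) = nat \<lceil>real (card E) / real ?D\<rceil> \<or> card (F i) = nat \<lfloor>real (card E) / real ?D\<rfloor>"
    if "i < ?D" for i
    using nearly_equal_summands[of ?D "\<lambda>k. card (F k)" i] balanced that by simp
  with F show ?thesis
    unfolding forest_partition_def by (intro exI[of _ F]) simp
qed

end
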